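(* (Correctness) In the TeeRollup protocol described in the context, malicious sequencers cannot upload an invalid state that is accepted by the TeeRollup smart contract (TSC); that is, whenever the TSC's latest recorded state is $st_h$ and it accepts a new state $st_{h+1}$ with transaction list $txs_{h+1}$, then $st_{h+1} = execute(st_h, txs_{h+1})$.
   Context: TeeRollup is a rollup protocol on a main chain with finality and smart contracts. There are $n$ sequencers $p_1,\dots,p_n$, each equipped with a TEE enclave $\eta_i$ holding a key pair $(pk_i,sk_i)$ whose public keys are registered on-chain; at most $f$ of these TEEs are compromised (for a compromised TEE the adversary knows $sk_i$ and can sign arbitrary messages), and the remaining TEEs are uncompromised. Any sequencer may be malicious (Byzantine); malicious sequencers fully control the inputs and outputs of their enclaves. Rollup states form a chain: a state at height $h$ is $st_h = \langle h, H(st_{h-1}), R_h, H(txs_h)\rangle$, where $H$ is a secure (collision-resistant) hash function, $R_h$ is the Merkle root of the account tree (addresses and balances) and $txs_h$ is the batch of transactions executed to produce $st_h$; the state transition is $st_{h+1} \leftarrow execute(st_h, txs_{h+1})$. An uncompromised enclave, given an input state $s$ and a batch $txs$, runs the fixed protocol program: it outputs the state $execute(s,txs)$, whose previous-hash field is $H(s)$, and signs (with $sk_i$) only states produced this way. A quorum certificate (QC) for a state is a set of valid signatures on its hash from at least $f+1$ distinct registered sequencers. The TSC records the latest accepted state $st_h$ and accepts a submitted state $S$ only if $S$ has height $h+1$, the previous-hash field of $S$ equals $H(st_h)$, and $S$ comes with a valid QC. A state is invalid if it is not the result of executing its transaction list on the latest recorded state. *)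

theory Defs
  imports Main
begin

text \<open>Rollup state st_h = (h, H(st_{h-1}), R_h, H(txs_h)).
  Type parameters: 'h = hash values, 'r = Merkle roots of the account tree.\<close>
record ('h, 'r) rstate =
  height :: nat
  prev_hash :: 'h
  root :: 'r
  txs_hash :: 'h

definition execute ::
  "(('h, 'r) rstate \<Rightarrow> 'h) \<Rightarrow> ('tx \<Rightarrow> 'h) \<Rightarrow> ('r \<Rightarrow> 'tx \<Rightarrow> 'r)
   \<Rightarrow> ('h, 'r) rstate \<Rightarrow> 'tx \<Rightarrow> ('h, 'r) rstate" where
  "execute H Htx upd s txs =
     \<lparr> height = Suc (height s), prev_hash = H s, root = upd (root s) txs, txs_hash = Htx txs \<rparr>"

definition is_QC ::
  "nat set \<Rightarrow> nat \<Rightarrow> (nat \<Rightarrow> 'h \<Rightarrow> bool) \<Rightarrow> (('h, 'r) rstate \<Rightarrow> 'h)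
   \<Rightarrow> nat set \<Rightarrow> ('h, 'r) rstate \<Rightarrow> bool" where
  "is_QC P f sig_valid H Q S \<longleftrightarrow>
     Q \<subseteq> P \<and> finite Q \<and> card Q \<ge> f + 1 \<and> (\<forall>i\<in>Q. sig_valid i (H S))"

definition tsc_accepts ::
  "nat set \<Rightarrow> nat \<Rightarrow> (nat \<Rightarrow> 'h \<Rightarrow> bool) \<Rightarrow> (('h, 'r) rstate \<Rightarrow> 'h)
   \<Rightarrow> ('h, 'r) rstate \<Rightarrow> ('h, 'r) rstate \<Rightarrow> nat set \<Rightarrow> bool" where
  "tsc_accepts P f sig_valid H st S Q \<longleftrightarrow>
     height S = Suc (height st) \<and> prev_hash S = H st \<and> is_QC P f sig_valid H Q S"

end

theory Submission
  imports Defs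
begin

text \<open>A quorum certificate carries more than f signatures while at most f TEEs are
  compromised, so some uncompromised enclave signed H(S). By collision resistance, S is
  then an output execute(s, b) of that enclave. The TSC's check on the previous-hash
  field, collision resistance again, and the recorded batch hash force s = st and
  b = txs.\<close>

lemma exists_not_in_if_card_less:
  assumes "finite C" and "card C < card Q"
  obtains i where "i \<in> Q" and "i \<notin> C"
proof -
  have "\<not> Q \<subseteq> C"
    using assms card_mono leD by blast
  then show thesis
    using that by blast
qed

lemma is_QC_has_uncompromised_signer:
  assumes "is_QC P f sig_valid H Q S" and "finite Comp" and "card Comp \<le> f"
  obtains i where "i \<in> P - Comp" and "sig_valid i (H S)"
proof -
  from assms(1) have Q: "Q \<subseteq> P" "card Q \<ge> f + 1" "\<forall>i\<in>Q. sig_valid i (H S)"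
    by (auto simp: is_QC_def)
  obtain i where "i \<in> Q" and "i \<notin> Comp"
    using exists_not_in_if_card_less[of Comp Q] assms(2,3) Q(2) by auto
  then show thesis
    using that Q(1,3) by blast
qed

lemma execute_args_determined_by_hashes:
  assumes "inj H" and "inj Htx"
    and "prev_hash (execute H Htx upd s b) = H st"
    and "txs_hash (execute H Htx upd s b) = Htx txs"
  shows "s = st" and "b = txs"
  using assms by (simp_all add: execute_def inj_eq)

theorem theorem1:
  fixes P :: "nat set" and Comp :: "nat set" and f :: nat
    and sig_valid :: "nat \<Rightarrow> 'h \<Rightarrow> bool"
    and H :: "('h, 'r) rstate \<Rightarrow> 'h" and Htx :: "'tx \<Rightarrow> 'h"
    and upd :: "'r \<Rightarrow> 'tx \<Rightarrow> 'r"
    and st S :: "('h, 'r) rstate" and Q :: "nat set" and txs :: "'tx"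
  assumes finP: "finite P"
    and comp_sub: "Comp \<subseteq> P"
    and comp_bound: "card Comp \<le> f"
    and H_cr: "inj H"
    and Htx_cr: "inj Htx"
    and honest: "\<And>i m. i \<in> P - Comp \<Longrightarrow> sig_valid i m \<Longrightarrow>
                    \<exists>s b. m = H (execute H Htx upd s b)"
    and accepted: "tsc_accepts P f sig_valid H st S Q"
    and batch: "txs_hash S = Htx txs"
  shows "S = execute H Htx upd st txs"
proof -
  from accepted have prev: "prev_hash S = H st" and QC: "is_QC P f sig_valid H Q S"
    by (simp_all add: tsc_accepts_def)
  have "finite Comp"
    using finP comp_sub finite_subset by blast
  then obtain i where "i \<in> P - Comp" and "sig_valid i (H S)"
    using is_QC_has_uncompromised_signer QC comp_bound by blast
  then obtain s b where "H S = H (execute H Htx upd s b)"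
    using honest by blast
  then have S: "S = execute H Htx upd s b"
    using H_cr by (simp add: inj_eq)
  then have "s = st" and "b = txs"
    using execute_args_determined_by_hashes[OF H_cr Htx_cr] prev batch by simp_all
  then show ?thesis
    using S by simp
qed

end
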